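(* Let $(\mathbb{R}^n,S)$ and $(\mathbb{R}^m,T)$ be topological Alexander quandles, where $S$, $T$ are continuous additive automorphisms such that $I-S$ and $I-T$ are invertible. Let $F:\mathbb{R}^n\to\mathbb{R}^m$ be a continuous quandle homomorphism with $F(0)=0$. Then $S$, $T$ and $F$ are $\mathbb{R}$-linear and $FS=TF$.
   Context: The topological Alexander quandle $(\mathbb{R}^n,S)$ has operation $x*y=Sx+(I-S)y$. A quandle homomorphism $F$ satisfies $F(x*y)=F(x)*F(y)$, here $F(Sx+(I-S)y)=TF(x)+(I-T)F(y)$. *)

theory Defs
  imports "HOL-Analysis.Analysis"
begin

definition alex_op :: "('a::real_vector \<Rightarrow> 'a) \<Rightarrow> 'a \<Rightarrow> 'a \<Rightarrow> 'a" where
  "alex_op S x y = S x + (y - S y)"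

definition top_alexander :: "('a::real_normed_vector \<Rightarrow> 'a) \<Rightarrow> bool" where
  "top_alexander S \<longleftrightarrow> continuous_on UNIV S \<and> (\<forall>x y. S (x + y) = S x + S y)
     \<and> bij S \<and> bij (\<lambda>x. x - S x)"

end

theory Submission
  imports Defs
begin

text \<open>Plugging \<open>y = 0\<close> and \<open>x = 0\<close> into the homomorphism identity shows that \<open>F\<close>
  intertwines \<open>S\<close> with \<open>T\<close> and \<open>I - S\<close> with \<open>I - T\<close>. Since \<open>S\<close> and \<open>I - S\<close> are
  surjective, every \<open>a + b\<close> can be written as \<open>S x + (y - S y)\<close>, so the identity
  makes \<open>F\<close> additive. A continuous additive map between real vector spaces is
  \<open>\<rat>\<close>-homogeneous, hence \<open>\<real>\<close>-linear by density of \<open>\<rat>\<close>; this applies to \<open>S\<close>,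
  \<open>T\<close> and \<open>F\<close> alike.\<close>

lemma additive_scaleR_of_int:
  fixes f :: "'a::real_vector \<Rightarrow> 'b::real_vector"
  assumes "Modules.additive f"
  shows "f (of_int k *\<^sub>R x) = of_int k *\<^sub>R f x"
proof -
  interpret Modules.additive f by fact
  have of_nat: "f (of_nat n *\<^sub>R x) = of_nat n *\<^sub>R f x" for n
    by (induction n) (simp_all add: zero add scaleR_add_left)
  show ?thesis
  proof (cases k rule: int_cases)
    case (nonneg n)
    then show ?thesis using of_nat by simp
  next
    case (neg n)
    then show ?thesis using of_nat[of "Suc n"] minus[of "of_nat (Suc n) *\<^sub>R x"]
      by (simp del: of_nat_Suc)
  qed
qed

lemma additive_scaleR_Rats:
  fixes f :: "'a::real_vector \<Rightarrow> 'b::real_vector"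
  assumes "Modules.additive f" and "r \<in> \<rat>"
  shows "f (r *\<^sub>R x) = r *\<^sub>R f x"
proof -
  obtain p q where q: "q > 0" and r: "r = of_int p / of_int q"
    using Rats_cases'[OF \<open>r \<in> \<rat>\<close>] by blast
  have "of_int q *\<^sub>R f (r *\<^sub>R x) = f (of_int q *\<^sub>R r *\<^sub>R x)"
    using additive_scaleR_of_int[OF assms(1), symmetric] .
  also have "of_int q *\<^sub>R r *\<^sub>R x = of_int p *\<^sub>R x"
    using q r by simp
  also have "f \<dots> = of_int p *\<^sub>R f x"
    using additive_scaleR_of_int[OF assms(1)] .
  finally have "of_int q *\<^sub>R f (r *\<^sub>R x) = of_int q *\<^sub>R (r *\<^sub>R f x)"
    using q r by simp
  then show ?thesis
    using q by (simp del: scaleR_scaleR)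
qed

lemma continuous_additive_imp_linear:
  fixes f :: "'a::real_normed_vector \<Rightarrow> 'b::real_normed_vector"
  assumes cont: "continuous_on UNIV f" and "Modules.additive f"
  shows "linear f"
proof -
  have "f (r *\<^sub>R x) = r *\<^sub>R f x" for r x
  proof -
    let ?E = "{r. f (r *\<^sub>R x) = r *\<^sub>R f x}"
    have "closed ?E"
      by (intro closed_Collect_eq continuous_intros continuous_on_compose2[OF cont]) auto
    moreover have "\<rat> \<subseteq> ?E"
      using additive_scaleR_Rats[OF \<open>Modules.additive f\<close>] by auto
    ultimately have "closure \<rat> \<subseteq> ?E"
      by (rule closure_minimal[rotated])
    then show ?thesis
      using Rats_closure_real by auto
  qed
  then show ?thesis
    using \<open>Modules.additive f\<close> by (intro linearI) (auto simp: Modules.additive.add)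
qed

lemma alex_hom_intertwines:
  fixes S :: "'a::real_vector \<Rightarrow> 'a" and T :: "'b::real_vector \<Rightarrow> 'b"
  assumes hom: "\<And>x y. F (alex_op S x y) = alex_op T (F x) (F y)"
    and "S 0 = 0" and "T 0 = 0" and "F 0 = 0"
  shows "F (S x) = T (F x)" and "F (x - S x) = F x - T (F x)"
  using hom[of x 0] hom[of 0 x] assms(2-4) by (simp_all add: alex_op_def)

lemma alex_hom_additive:
  fixes S :: "'a::real_vector \<Rightarrow> 'a" and T :: "'b::real_vector \<Rightarrow> 'b"
  assumes hom: "\<And>x y. F (alex_op S x y) = alex_op T (F x) (F y)"
    and "surj S" and "surj (\<lambda>x. x - S x)"
    and "S 0 = 0" and "T 0 = 0" and "F 0 = 0"
  shows "Modules.additive F"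
proof
  fix a b
  obtain x where a: "a = S x" using \<open>surj S\<close> by (metis surjD)
  obtain y where b: "b = y - S y" using \<open>surj (\<lambda>x. x - S x)\<close> by (metis surjD)
  have "F (a + b) = T (F x) + (F y - T (F y))"
    using hom[of x y] a b by (simp add: alex_op_def)
  also have "\<dots> = F a + F b"
    using alex_hom_intertwines[OF hom assms(4-6)] a b by simp
  finally show "F (a + b) = F a + F b" .
qed

theorem mainTheorem14:
  fixes S :: "real^'n \<Rightarrow> real^'n" and T :: "real^'m \<Rightarrow> real^'m"
    and F :: "real^'n \<Rightarrow> real^'m"
  assumes "top_alexander S" and "top_alexander T"
    and "continuous_on UNIV F"
    and "\<And>x y. F (alex_op S x y) = alex_op T (F x) (F y)"
    and "F 0 = 0"
  shows "linear S \<and> linear T \<and> linear F \<and> F \<circ> S = T \<circ> F"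
proof -
  have S: "continuous_on UNIV S" "Modules.additive S" "surj S" "surj (\<lambda>x. x - S x)"
    using assms(1) unfolding top_alexander_def by (auto simp: Modules.additive_def bij_is_surj)
  have T: "continuous_on UNIV T" "Modules.additive T"
    using assms(2) unfolding top_alexander_def by (auto simp: Modules.additive_def)
  have zero: "S 0 = 0" "T 0 = 0"
    using S(2) T(2) by (simp_all add: Modules.additive.zero)
  have "Modules.additive F"
    using alex_hom_additive[OF assms(4) S(3,4) zero assms(5)] .
  moreover have "F \<circ> S = T \<circ> F"
    using alex_hom_intertwines(1)[OF assms(4) zero assms(5)] by auto
  ultimately show ?thesis
    using continuous_additive_imp_linear[OF S(1,2)] continuous_additive_imp_linear[OF T]
      continuous_additive_imp_linear[OF assms(3)] by simp
qed

end
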